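(* Let $h_s$ be a scaling filter of length $M$ whose associated scaling function $\phi_h\in L^2(\mathbb R)$ is bounded. Then for every integer $\mathcal L\ge 1$ and every $f\in\ell^1(\mathbb Z)$, \[ \bigl\lVert p_s^{(\mathcal L)} W_h^{(\mathcal L)} f \bigr\rVert_2 \le M\, 2^{-(\mathcal L-1)/2}\, \lVert \phi_h\rVert_\infty\, \lVert f\rVert_1 . \]
   Context: Fourier convention: for $f\in\ell^2(\mathbb Z)$, $\hat f(k)=\sum_n f[n]e^{-\mathrm i nk}$, a $2\pi$-periodic function; for a filter $h$ we write $h(k)$ for its Fourier transform. For a bounded measurable $2\pi$-periodic function $\theta$, $m(\theta)$ denotes the Fourier multiplier on $\ell^2(\mathbb Z)$, $(m(\theta)f)^\wedge(k)=\theta(k)\hat f(k)$; $m(h)$ is the multiplier by $h(k)$, i.e. convolution with $h$. The upsampling operator $\uparrow$ on $\ell^2(\mathbb Z)$ is defined by $\delta_n\mapsto\delta_{2n}$. A scaling filter of length $M$ is a sequence $h_s$ supported on $M$ consecutive integers with $|h_s(k)|^2+|h_s(k+\pi)|^2=2$ for all $k$, $h_s(0)=\sqrt2$, such that the scaling function $\phi_h\in L^2(\mathbb R)$ (the solution of $\phi_h(x)=\sqrt2\sum_n h_s[n]\phi_h(2x-n)$ with $\int\phi_h=1$) has orthonormal integer translates, i.e. generates an orthonormal multiresolution analysis. The associated wavelet filter is $h_w(k)=e^{\mathrm ik}\,\overline{h_s(k+\pi)}$. The wavelet transform truncated at level $\mathcal L$ is the unitary $W_h^{(\mathcal L)}:\ell^2(\mathbb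 Z)\to\ell^2(\mathbb Z)\otimes\mathbb C^{\mathcal L+1}$ (orthonormal basis $|1\rangle,\dots,|\mathcal L+1\rangle$ of $\mathbb C^{\mathcal L+1}$) whose adjoint is given by $W_h^{(\mathcal L)\dagger}(I\otimes|\ell\rangle)=[m(h_s)\uparrow]^{\ell-1}m(h_w)\uparrow$ for $\ell=1,\dots,\mathcal L$ (wavelet outputs) and $W_h^{(\mathcal L)\dagger}(I\otimes|\mathcal L+1\rangle)=[m(h_s)\uparrow]^{\mathcal L}$ (scaling output). $p_w^{(\mathcal L)}=I\otimes\sum_{\ell=1}^{\mathcal L}|\ell\rangle\langle\ell|$ and $p_s^{(\mathcal L)}=I\otimes|\mathcal L+1\rangle\langle\mathcal L+1|$ are the projections onto the wavelet outputs and the scaling output. *)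

theory Defs
  imports "HOL-Analysis.Analysis" "HOL-Probability.Essential_Supremum"
begin

definition filter_ft :: "(int \<Rightarrow> complex) \<Rightarrow> real \<Rightarrow> complex" where
  "filter_ft h k = (\<Sum>\<^sub>\<infinity>n. h n * cis (- (of_int n * k)))"

definition supported_len :: "(int \<Rightarrow> complex) \<Rightarrow> nat \<Rightarrow> bool" where
  "supported_len h M \<longleftrightarrow> (\<exists>a::int. \<forall>n. h n \<noteq> 0 \<longrightarrow> a \<le> n \<and> n < a + int M)"

definition is_scaling_function :: "(int \<Rightarrow> complex) \<Rightarrow> (real \<Rightarrow> complex) \<Rightarrow> bool" where
  "is_scaling_function h \<phi> \<longleftrightarrow>
     integrable lborel (\<lambda>x. (cmod (\<phi> x))\<^sup>2) \<and>
     integrable lborel \<phi> \<and> (\<integral>x. \<phi> x \<partial>lborel) = 1 \<and>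
     (AE x in lborel. \<phi> x = of_real (sqrt 2) * (\<Sum>\<^sub>\<infinity>n. h n * \<phi> (2 * x - of_int n))) \<and>
     (\<forall>m n :: int. (\<integral>x. \<phi> (x - of_int m) * cnj (\<phi> (x - of_int n)) \<partial>lborel)
                     = (if m = n then 1 else 0))"

definition scaling_filter :: "(int \<Rightarrow> complex) \<Rightarrow> nat \<Rightarrow> (real \<Rightarrow> complex) \<Rightarrow> bool" where
  "scaling_filter h M \<phi> \<longleftrightarrow>
     supported_len h M \<and>
     (\<forall>k. (cmod (filter_ft h k))\<^sup>2 + (cmod (filter_ft h (k + pi)))\<^sup>2 = 2) \<and>
     filter_ft h 0 = of_real (sqrt 2) \<and>
     is_scaling_function h \<phi>"

definition conv :: "(int \<Rightarrow> complex) \<Rightarrow> (int \<Rightarrow> complex) \<Rightarrow> int \<Rightarrow> complex" where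
  "conv h f n = (\<Sum>\<^sub>\<infinity>k. h k * f (n - k))"

definition upsample :: "(int \<Rightarrow> complex) \<Rightarrow> int \<Rightarrow> complex" where
  "upsample f n = (if even n then f (n div 2) else 0)"

definition downsample :: "(int \<Rightarrow> complex) \<Rightarrow> int \<Rightarrow> complex" where
  "downsample f n = f (2 * n)"

text \<open>m(h)^\<dagger> = m(conj h) = convolution with n \<mapsto> conj (h (-n)).\<close>
definition adj_filter :: "(int \<Rightarrow> complex) \<Rightarrow> int \<Rightarrow> complex" where
  "adj_filter h n = cnj (h (- n))"

text \<open>Scaling output of W_h^(L) f, i.e. the |L+1> component of W f, which is
  ([m(h_s) up]^L)^\<dagger> f = (down m(h_s)^\<dagger>)^L f.\<close>
definition scaling_output :: "(int \<Rightarrow> complex) \<Rightarrow> nat \<Rightarrow> (int \<Rightarrow> complex) \<Rightarrow> int \<Rightarrow> complex" where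
  "scaling_output h L f = ((\<lambda>g. downsample (conv (adj_filter h) g)) ^^ L) f"

definition l2norm :: "(int \<Rightarrow> complex) \<Rightarrow> real" where
  "l2norm g = sqrt (\<Sum>\<^sub>\<infinity>n. (cmod (g n))\<^sup>2)"

definition l1norm :: "(int \<Rightarrow> complex) \<Rightarrow> real" where
  "l1norm g = (\<Sum>\<^sub>\<infinity>n. cmod (g n))"

definition sup_norm_ess :: "(real \<Rightarrow> complex) \<Rightarrow> ereal" where
  "sup_norm_ess \<phi> = esssup lborel (\<lambda>x. ereal (cmod (\<phi> x)))"

end

theory Submission
  imports Defs
begin

text \<open>
  Let \<open>h\<^sub>s\<close> be supported on \<open>[a, b]\<close>, \<open>b - a + 1 = M\<close>. Unrolling \<open>L\<close> levels, the scaling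
  output is the polyphase filter \<open>g[n] = \<Sum>\<^sub>q f[2\<^sup>L n + q] conj(c\<^sub>L[q])\<close>, where \<open>c\<^sub>L\<close>, the filter
  of \<open>[m(h\<^sub>s)\<up>]\<^sup>L\<close>, is supported on at most \<open>M 2\<^sup>L\<close> consecutive integers. Iterating the
  refinement equation gives \<open>\<phi> = 2\<^sup>L\<^sup>/\<^sup>2 \<Sum>\<^sub>j c\<^sub>L[j] \<phi>(2\<^sup>L \<cdot> - j)\<close>, so orthonormality of the
  translates yields \<open>c\<^sub>L[k] = 2\<^sup>L\<^sup>/\<^sup>2 \<langle>\<phi>, \<phi>(2\<^sup>L \<cdot> - k)\<rangle>\<close>, hence
  \<open>|c\<^sub>L[k]| \<le> 2\<^sup>-\<^sup>L\<^sup>/\<^sup>2 \<parallel>\<phi>\<parallel>\<^sub>\<infinity> \<parallel>\<phi>\<parallel>\<^sub>1\<close>. The same identity bounds the mass of \<open>|\<phi>|\<close> outside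
  \<open>[a - 1/2, b + 1/2]\<close> by a constant times its mass outside \<open>[a - 2\<^sup>L/2, b + 2\<^sup>L/2]\<close>, which
  tends to \<open>0\<close>; so \<open>\<phi>\<close> lives on an interval of length \<open>M\<close> and \<open>\<parallel>\<phi>\<parallel>\<^sub>1 \<le> \<surd>M \<parallel>\<phi>\<parallel>\<^sub>2 = \<surd>M\<close>.
  Finally, a polyphase filter whose taps are bounded by \<open>A\<close> and lie in \<open>K\<close> blocks of \<open>2\<^sup>L\<close>
  consecutive integers maps \<open>\<ell>\<^sup>1\<close> to \<open>\<ell>\<^sup>2\<close> with norm at most \<open>A \<surd>K\<close>; take
  \<open>A = 2\<^sup>-\<^sup>L\<^sup>/\<^sup>2 \<parallel>\<phi>\<parallel>\<^sub>\<infinity> \<surd>M\<close> and \<open>K = M\<close>.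
\<close>

lemma AE_lborel_const: "(AE x in (lborel :: real measure). P) \<longleftrightarrow> P"
  by (cases P) (simp_all add: eventually_False ae_filter_eq_bot_iff)

lemma borel_measurable_cnj [measurable]:
  "(f :: 'a \<Rightarrow> complex) \<in> borel_measurable M \<Longrightarrow> (\<lambda>x. cnj (f x)) \<in> borel_measurable M"
  by (rule borel_measurable_continuous_on[OF continuous_on_cnj[OF continuous_on_id]])

subsection \<open>Summation over residue classes\<close>

lemma has_sum_finite_sum:
  fixes F :: "'a \<Rightarrow> 'i \<Rightarrow> 'b::topological_comm_monoid_add"
  assumes "finite I" and "\<And>i. i \<in> I \<Longrightarrow> ((\<lambda>x. F x i) has_sum s i) A"
  shows "((\<lambda>x. \<Sum>i\<in>I. F x i) has_sum (\<Sum>i\<in>I. s i)) A"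
  using assms by (induction I rule: finite_induct) (auto intro: has_sum_add)

lemma bij_betw_residue_blocks:
  fixes c d :: int
  assumes c: "c > 0"
  shows "bij_betw (\<lambda>(q, n). c * n + q) ({d..<d + c} \<times> UNIV) UNIV"
proof (rule bij_betwI[where g = "\<lambda>m. (d + (m - d) mod c, (m - d) div c)"])
  show "(\<lambda>m. (d + (m - d) mod c, (m - d) div c)) \<in> UNIV \<rightarrow> {d..<d + c} \<times> UNIV"
    using c by (auto simp: pos_mod_bound)
  show "(\<lambda>m. (d + (m - d) mod c, (m - d) div c)) ((\<lambda>(q, n). c * n + q) x) = x"
    if "x \<in> {d..<d + c} \<times> UNIV" for x
  proof -
    obtain q n where x: "x = (q, n)"
      by (cases x)
    with that have r: "0 \<le> q - d" "q - d < c"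
      by auto
    have e: "c * n + q - d = (q - d) + n * c"
      by simp
    have "(c * n + q - d) mod c = q - d" "(c * n + q - d) div c = n"
      unfolding e using r c by simp_all
    with x show ?thesis
      by simp
  qed
  show "(\<lambda>(q, n). c * n + q) ((\<lambda>m. (d + (m - d) mod c, (m - d) div c)) m) = m" for m
    using mult_div_mod_eq[of c "m - d"] by simp
qed auto

lemma summable_on_arith_progression:
  fixes g :: "int \<Rightarrow> 'b::banach" and c :: int
  assumes "g summable_on UNIV" and "c \<noteq> 0"
  shows "(\<lambda>n. g (c * n + q)) summable_on UNIV"
proof -
  have "g summable_on range (\<lambda>n. c * n + q)"
    by (rule summable_on_subset_banach[OF assms(1)]) auto
  moreover have "inj (\<lambda>n. c * n + q)"
    using assms(2) by (auto simp: inj_def)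
  ultimately show ?thesis
    by (simp add: summable_on_reindex o_def)
qed

lemma infsum_residue_classes:
  fixes g :: "int \<Rightarrow> 'b::banach" and c d :: int
  assumes g: "g summable_on UNIV" and c: "c > 0"
  shows "(\<Sum>q\<in>{d..<d + c}. \<Sum>\<^sub>\<infinity>n. g (c * n + q)) = (\<Sum>\<^sub>\<infinity>m. g m)"
proof -
  note bij = bij_betw_residue_blocks[OF c, of d]
  have "(\<lambda>x. g ((\<lambda>(q, n). c * n + q) x)) summable_on {d..<d + c} \<times> UNIV"
    using summable_on_reindex_bij_betw[OF bij] g by blast
  then have "(\<Sum>q\<in>{d..<d + c}. \<Sum>\<^sub>\<infinity>n. g (c * n + q))
      = infsum (\<lambda>x. g ((\<lambda>(q, n). c * n + q) x)) ({d..<d + c} \<times> UNIV)"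
    using infsum_Sigma_banach by fastforce
  also have "\<dots> = (\<Sum>\<^sub>\<infinity>m. g m)"
    by (rule infsum_reindex_bij_betw[OF bij])
  finally show ?thesis .
qed

lemma infsum_residue_blocks:
  fixes g :: "int \<Rightarrow> 'b::banach" and c d :: int and K :: nat
  assumes g: "g summable_on UNIV" and c: "c > 0"
  shows "(\<Sum>q\<in>{d..<d + int K * c}. \<Sum>\<^sub>\<infinity>n. g (c * n + q)) = real K *\<^sub>R (\<Sum>\<^sub>\<infinity>m. g m)"
proof (induction K)
  case (Suc K)
  define e where "e = d + int K * c"
  have "d + int (Suc K) * c = e + c" and "d \<le> e"
    using c by (simp_all add: e_def algebra_simps)
  then have "{d..<d + int (Suc K) * c} = {d..<e} \<union> {e..<e + c}"
    using c by auto
  then have "(\<Sum>q\<in>{d..<d + int (Suc K) * c}. \<Sum>\<^sub>\<infinity>n. g (c * n + q))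
      = (\<Sum>q\<in>{d..<e}. \<Sum>\<^sub>\<infinity>n. g (c * n + q)) + (\<Sum>q\<in>{e..<e + c}. \<Sum>\<^sub>\<infinity>n. g (c * n + q))"
    by (simp add: sum.union_disjoint)
  also have "\<dots> = real K *\<^sub>R (\<Sum>\<^sub>\<infinity>m. g m) + (\<Sum>\<^sub>\<infinity>m. g m)"
    using Suc.IH infsum_residue_classes[OF g c, of e] by (simp add: e_def)
  finally show ?case
    by (simp add: scaleR_add_left)
qed simp

lemma has_sum_polyphase_norm_le:
  fixes f :: "int \<Rightarrow> complex" and c d :: int and K :: nat
  assumes f: "(\<lambda>n. cmod (f n)) summable_on UNIV" and c: "c > 0"
    and S: "finite S" "S \<subseteq> {d..<d + int K * c}"
  obtains s where "((\<lambda>n. \<Sum>q\<in>S. cmod (f (c * n + q))) has_sum s) UNIV" and "s \<le> K * l1norm f"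
proof
  show "((\<lambda>n. \<Sum>q\<in>S. cmod (f (c * n + q))) has_sum (\<Sum>q\<in>S. \<Sum>\<^sub>\<infinity>n. cmod (f (c * n + q)))) UNIV"
    using S(1) summable_on_arith_progression[OF f] c by (intro has_sum_finite_sum) auto
  have "(\<Sum>q\<in>S. \<Sum>\<^sub>\<infinity>n. cmod (f (c * n + q)))
      \<le> (\<Sum>q\<in>{d..<d + int K * c}. \<Sum>\<^sub>\<infinity>n. cmod (f (c * n + q)))"
    using S by (intro sum_mono2) (auto intro: infsum_nonneg)
  also have "\<dots> = K * l1norm f"
    using infsum_residue_blocks[OF f c, of d K] by (simp add: l1norm_def)
  finally show "(\<Sum>q\<in>S. \<Sum>\<^sub>\<infinity>n. cmod (f (c * n + q))) \<le> K * l1norm f" .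
qed

text \<open>
  Each sample of the polyphase filter is bounded by \<open>A N\<close> with \<open>N = \<parallel>f\<parallel>\<^sub>1\<close>, and the samples
  sum to at most \<open>A K N\<close>, so their squares sum to at most \<open>A\<^sup>2 K N\<^sup>2\<close>.
\<close>
lemma l2norm_polyphase_le:
  fixes f H :: "int \<Rightarrow> complex" and c d :: int and K :: nat and A :: real
  assumes f: "(\<lambda>n. cmod (f n)) summable_on UNIV" and c: "c > 0" and A: "A \<ge> 0"
    and S: "finite S" "S \<subseteq> {d..<d + int K * c}"
    and H: "\<And>q. q \<in> S \<Longrightarrow> cmod (H q) \<le> A"
  shows "l2norm (\<lambda>n. \<Sum>q\<in>S. f (c * n + q) * cnj (H q)) \<le> A * sqrt K * l1norm f"
proof -
  define N where "N = l1norm f"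
  have N: "N \<ge> 0"
    unfolding N_def l1norm_def by (rule infsum_nonneg) auto
  define F where "F n = (\<Sum>q\<in>S. cmod (f (c * n + q)))" for n
  have F_nonneg: "F n \<ge> 0" for n
    by (simp add: F_def sum_nonneg)
  obtain s where F_sum: "(F has_sum s) UNIV" and "s \<le> K * N"
    using has_sum_polyphase_norm_le[OF f c S] unfolding F_def N_def .
  then have F_total: "infsum F UNIV \<le> K * N"
    by (simp add: infsumI)
  have F_le: "F n \<le> N" for n
  proof -
    have "F n = (\<Sum>m\<in>(\<lambda>q. c * n + q) ` S. cmod (f m))"
      unfolding F_def by (subst sum.reindex) (auto simp: inj_on_def)
    also have "\<dots> \<le> N"
      unfolding N_def l1norm_def by (rule finite_sum_le_infsum[OF f]) (use S in auto)
    finally show ?thesis .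
  qed
  have sample_sq: "(cmod (\<Sum>q\<in>S. f (c * n + q) * cnj (H q)))\<^sup>2 \<le> A\<^sup>2 * N * F n" for n
  proof -
    have "cmod (\<Sum>q\<in>S. f (c * n + q) * cnj (H q)) \<le> (\<Sum>q\<in>S. cmod (f (c * n + q)) * A)"
      by (rule order_trans[OF norm_sum sum_mono]) (auto simp: norm_mult intro!: mult_left_mono H)
    then have "cmod (\<Sum>q\<in>S. f (c * n + q) * cnj (H q)) \<le> A * F n"
      by (simp add: F_def sum_distrib_left mult.commute)
    then have "(cmod (\<Sum>q\<in>S. f (c * n + q) * cnj (H q)))\<^sup>2 \<le> (A * F n)\<^sup>2"
      by (intro power_mono) auto
    also have "\<dots> \<le> A\<^sup>2 * N * F n"
      using mult_left_mono[OF mult_right_mono[OF F_le F_nonneg], of "A\<^sup>2" n]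
      by (simp add: power2_eq_square algebra_simps)
    finally show ?thesis .
  qed
  have F_summable: "(\<lambda>n. A\<^sup>2 * N * F n) summable_on UNIV"
    using F_sum by (intro summable_on_cmult_right) (auto simp: summable_on_def)
  have "(\<Sum>\<^sub>\<infinity>n. (cmod (\<Sum>q\<in>S. f (c * n + q) * cnj (H q)))\<^sup>2) \<le> (\<Sum>\<^sub>\<infinity>n. A\<^sup>2 * N * F n)"
    using sample_sq by (intro infsum_mono F_summable summable_on_comparison_test[OF F_summable]) auto
  also have "\<dots> = A\<^sup>2 * N * infsum F UNIV"
    using F_sum by (intro infsum_cmult_right) (auto simp: summable_on_def)
  also have "\<dots> \<le> A\<^sup>2 * N * (K * N)"
    using F_total N by (intro mult_left_mono) auto
  also have "\<dots> = (A * sqrt K * N)\<^sup>2"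
    by (simp add: power2_eq_square)
  finally show ?thesis
    unfolding l2norm_def N_def[symmetric] using A N real_le_lsqrt by auto
qed

subsection \<open>The cascade filter\<close>

definition cascade_support :: "int \<Rightarrow> int \<Rightarrow> nat \<Rightarrow> int set" where
  "cascade_support a b L = {a * (2 ^ L - 1) .. b * (2 ^ L - 1)}"

text \<open>
  \<open>cascade_coeff h a b L = [m(h)\<up>]\<^sup>L \<delta>\<^sub>0\<close>, the filter of \<open>[m(h)\<up>]\<^sup>L\<close>. Restricting the sums to
  \<open>cascade_support\<close> loses nothing when \<open>h\<close> is supported on \<open>[a, b]\<close>.
\<close>
fun cascade_coeff :: "(int \<Rightarrow> complex) \<Rightarrow> int \<Rightarrow> int \<Rightarrow> nat \<Rightarrow> int \<Rightarrow> complex" where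
  "cascade_coeff h a b 0 p = (if p = 0 then 1 else 0)"
| "cascade_coeff h a b (Suc L) p =
     (\<Sum>q\<in>cascade_support a b L. h (p - 2 * q) * cascade_coeff h a b L q)"

lemma finite_cascade_support [simp]: "finite (cascade_support a b L)"
  by (simp add: cascade_support_def)

lemma cascade_support_0 [simp]: "cascade_support a b 0 = {0}"
  by (simp add: cascade_support_def)

lemma card_cascade_support_le:
  assumes "a \<le> b"
  shows "real (card (cascade_support a b L)) \<le> real_of_int (b - a + 1) * 2 ^ L"
proof -
  define p :: int where "p = 2 ^ L"
  have p: "1 \<le> p"
    by (simp add: p_def)
  have "0 \<le> (b - a) * (p - 1)"
    using assms p by simp
  then have "real (card (cascade_support a b L)) = of_int ((b - a) * (p - 1) + 1)"
    by (simp add: cascade_support_def p_def[symmetric] algebra_simps)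
  also have "\<dots> \<le> of_int ((b - a + 1) * p)"
    using assms p unfolding of_int_le_iff by (simp add: algebra_simps)
  finally show ?thesis
    by (simp add: p_def)
qed

lemma cascade_support_subset_blocks:
  assumes "a \<le> b"
  shows "cascade_support a b L \<subseteq> {a * (2 ^ L - 1) ..< a * (2 ^ L - 1) + (b - a + 1) * 2 ^ L}"
proof -
  define p :: int where "p = 2 ^ L"
  have "b * (p - 1) < a * (p - 1) + (b - a + 1) * p"
    using assms by (simp add: p_def algebra_simps add_le_less_mono)
  then show ?thesis
    by (auto simp: cascade_support_def p_def)
qed

lemma cascade_support_regroup:
  fixes h H :: "int \<Rightarrow> 'c::comm_ring_1"
  assumes h: "\<And>n. h n \<noteq> 0 \<Longrightarrow> a \<le> n \<and> n \<le> b"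
  shows "(\<Sum>j\<in>cascade_support a b L. \<Sum>i\<in>{a..b}. H j * h i * Y (2 * j + i))
       = (\<Sum>p\<in>cascade_support a b (Suc L).
            (\<Sum>q\<in>cascade_support a b L. h (p - 2 * q) * H q) * Y p)"
proof -
  have inner: "(\<Sum>p\<in>cascade_support a b (Suc L). h (p - 2 * q) * H q * Y p)
             = (\<Sum>i\<in>{a..b}. H q * h i * Y (2 * q + i))"
    if q: "q \<in> cascade_support a b L" for q
  proof -
    have "(\<lambda>i. 2 * q + i) ` {a..b} \<subseteq> cascade_support a b (Suc L)"
      using q by (auto simp: cascade_support_def algebra_simps)
    moreover have "h (p - 2 * q) = 0" if "p \<notin> (\<lambda>i. 2 * q + i) ` {a..b}" for p
      using h[of "p - 2 * q"] that by (force simp: image_iff)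
    ultimately have "(\<Sum>p\<in>cascade_support a b (Suc L). h (p - 2 * q) * H q * Y p)
        = (\<Sum>p\<in>(\<lambda>i. 2 * q + i) ` {a..b}. h (p - 2 * q) * H q * Y p)"
      by (intro sum.mono_neutral_right) auto
    also have "\<dots> = (\<Sum>i\<in>{a..b}. H q * h i * Y (2 * q + i))"
      by (subst sum.reindex) (auto simp: inj_on_def mult.commute)
    finally show ?thesis .
  qed
  have "(\<Sum>p\<in>cascade_support a b (Suc L). (\<Sum>q\<in>cascade_support a b L. h (p - 2 * q) * H q) * Y p)
      = (\<Sum>q\<in>cascade_support a b L. \<Sum>p\<in>cascade_support a b (Suc L). h (p - 2 * q) * H q * Y p)"
    by (simp add: sum_distrib_right sum.swap[of _ "cascade_support a b (Suc L)"])
  also have "\<dots> = (\<Sum>j\<in>cascade_support a b L. \<Sum>i\<in>{a..b}. H j * h i * Y (2 * j + i))"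
    using inner by (rule sum.cong[OF refl])
  finally show ?thesis ..
qed

lemma downsample_conv_adj_filter:
  assumes h: "\<And>n. h n \<noteq> 0 \<Longrightarrow> a \<le> n \<and> n \<le> b"
  shows "downsample (conv (adj_filter h) g) n = (\<Sum>i\<in>{a..b}. cnj (h i) * g (2 * n + i))"
proof -
  have "conv (adj_filter h) g (2 * n) = (\<Sum>k\<in>uminus ` {a..b}. cnj (h (- k)) * g (2 * n - k))"
    unfolding conv_def adj_filter_def
    by (subst infsum_finite[symmetric], simp, rule infsum_cong_neutral) (use h in force)+
  also have "\<dots> = (\<Sum>i\<in>{a..b}. cnj (h i) * g (2 * n + i))"
    by (subst sum.reindex) (auto simp: inj_on_def)
  finally show ?thesis
    by (simp add: downsample_def)
qed

lemma scaling_output_eq_cascade: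
  assumes h: "\<And>n. h n \<noteq> 0 \<Longrightarrow> a \<le> n \<and> n \<le> b"
  shows "scaling_output h L g n
       = (\<Sum>q\<in>cascade_support a b L. g (2 ^ L * n + q) * cnj (cascade_coeff h a b L q))"
proof (induction L arbitrary: g n)
  case 0
  then show ?case
    by (simp add: scaling_output_def)
next
  case (Suc L)
  let ?Y = "\<lambda>p. cnj (g (2 ^ Suc L * n + p))"
  have "scaling_output h (Suc L) g n
      = scaling_output h L (\<lambda>m. downsample (conv (adj_filter h) g) m) n"
    unfolding scaling_output_def by (simp only: funpow_Suc_right o_apply)
  also have "\<dots> = (\<Sum>q\<in>cascade_support a b L.
      (\<Sum>i\<in>{a..b}. cnj (h i) * g (2 * (2 ^ L * n + q) + i)) * cnj (cascade_coeff h a b L q))"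
    by (simp add: Suc.IH downsample_conv_adj_filter[OF h])
  also have "\<dots> = cnj (\<Sum>j\<in>cascade_support a b L. \<Sum>i\<in>{a..b}.
                       cascade_coeff h a b L j * h i * ?Y (2 * j + i))"
    by (simp add: sum_distrib_left sum_distrib_right algebra_simps)
  also have "\<dots> = cnj (\<Sum>p\<in>cascade_support a b (Suc L).
                       (\<Sum>q\<in>cascade_support a b L. h (p - 2 * q) * cascade_coeff h a b L q) * ?Y p)"
    by (rule arg_cong[where f = cnj], rule cascade_support_regroup[OF h])
  also have "\<dots> = (\<Sum>q\<in>cascade_support a b (Suc L).
                    g (2 ^ Suc L * n + q) * cnj (cascade_coeff h a b (Suc L) q))"
    by (simp add: mult.commute)
  finally show ?case .
qed

subsection \<open>Bounded compactly refinable scaling functions\<close>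

definition exterior :: "int \<Rightarrow> int \<Rightarrow> real \<Rightarrow> real set" where
  "exterior a b r = - {of_int a - r .. of_int b + r}"

lemma exterior_in_borel [measurable]: "exterior a b r \<in> sets borel"
  unfolding exterior_def by measurable

lemma not_mem_exterior:
  "\<bar>y\<bar> + \<bar>of_int a\<bar> + \<bar>of_int b\<bar> \<le> r \<Longrightarrow> y \<notin> exterior a b r"
  by (auto simp: exterior_def abs_if split: if_splits)

locale bounded_scaling_function =
  fixes h :: "int \<Rightarrow> complex" and \<phi> :: "real \<Rightarrow> complex" and a b :: int and B :: real
  assumes scaling_function: "is_scaling_function h \<phi>"
    and filter_support: "\<And>n. h n \<noteq> 0 \<Longrightarrow> a \<le> n \<and> n \<le> b"
    and support_nonempty: "a \<le> b"
    and bounded: "AE x in lborel. cmod (\<phi> x) \<le> B"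
begin

lemma square_integrable: "integrable lborel (\<lambda>x. (cmod (\<phi> x))\<^sup>2)"
  and integrable: "integrable lborel \<phi>"
  and refinement: "AE x in lborel. \<phi> x = of_real (sqrt 2) * (\<Sum>\<^sub>\<infinity>n. h n * \<phi> (2 * x - of_int n))"
  and orthonormal: "\<And>m n. (\<integral>x. \<phi> (x - of_int m) * cnj (\<phi> (x - of_int n)) \<partial>lborel)
                           = (if m = n then 1 else 0)"
  using scaling_function by (simp_all add: is_scaling_function_def)

lemma borel_measurable_phi [measurable]: "\<phi> \<in> borel_measurable borel"
  using borel_measurable_integrable[OF integrable] by simp

lemma bound_nonneg: "B \<ge> 0"
proof -
  have "AE x in (lborel :: real measure). 0 \<le> B"
    using bounded by eventually_elim (rule order_trans[OF norm_ge_zero])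
  then show ?thesis
    by (simp add: AE_lborel_const)
qed

lemma refinement_finite:
  "AE x in lborel. \<phi> x = of_real (sqrt 2) * (\<Sum>i\<in>{a..b}. h i * \<phi> (2 * x - of_int i))"
  using refinement
proof eventually_elim
  case (elim x)
  have "(\<Sum>\<^sub>\<infinity>n. h n * \<phi> (2 * x - of_int n)) = infsum (\<lambda>n. h n * \<phi> (2 * x - of_int n)) {a..b}"
    by (rule infsum_cong_neutral) (use filter_support in force)+
  with elim show ?case
    by simp
qed

lemma cascade_refinement:
  "AE x in lborel. \<phi> x = of_real (sqrt 2) ^ L *
     (\<Sum>j\<in>cascade_support a b L. cascade_coeff h a b L j * \<phi> (2 ^ L * x - of_int j))"
proof (induction L)
  case 0
  then show ?case
    by simp
next
  case (Suc L)
  let ?R = "\<lambda>y. \<phi> y = of_real (sqrt 2) * (\<Sum>i\<in>{a..b}. h i * \<phi> (2 * y - of_int i))"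
  have "AE x in lborel. ?R (- of_int j + 2 ^ L * x)" for j
    by (rule AE_borel_affine[OF _ _ refinement_finite]) auto
  then have "AE x in lborel. \<forall>j\<in>cascade_support a b L. ?R (- of_int j + 2 ^ L * x)"
    by (simp add: AE_finite_all)
  with Suc show ?case
  proof eventually_elim
    case (elim x)
    let ?Y = "\<lambda>p. \<phi> (2 ^ Suc L * x - of_int p)"
    have "\<phi> x = of_real (sqrt 2) ^ L * (\<Sum>j\<in>cascade_support a b L. cascade_coeff h a b L j *
                 (of_real (sqrt 2) * (\<Sum>i\<in>{a..b}. h i * ?Y (2 * j + i))))"
      using elim by (simp add: algebra_simps)
    also have "\<dots> = of_real (sqrt 2) ^ Suc L * (\<Sum>j\<in>cascade_support a b L. \<Sum>i\<in>{a..b}.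
                      cascade_coeff h a b L j * h i * ?Y (2 * j + i))"
      by (simp add: sum_distrib_left mult.assoc mult.left_commute)
    also have "\<dots> = of_real (sqrt 2) ^ Suc L *
        (\<Sum>p\<in>cascade_support a b (Suc L). cascade_coeff h a b (Suc L) p * ?Y p)"
      using cascade_support_regroup[OF filter_support, where L = L and H = "cascade_coeff h a b L"
          and Y = ?Y] by simp
    finally show ?case .
  qed
qed

lemma integrable_affine:
  fixes c t :: real
  assumes "c \<noteq> 0"
  shows "integrable lborel (\<lambda>x. \<phi> (c * x - t))"
    and "integrable lborel (\<lambda>x. (cmod (\<phi> (c * x - t)))\<^sup>2)"
  using lborel_integrable_real_affine[OF integrable assms, of "- t"]
    lborel_integrable_real_affine[OF square_integrable assms, of "- t"]
  by (simp_all add: algebra_simps)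

lemma integrable_affine_product:
  fixes c1 c2 t1 t2 :: real
  assumes "c1 \<noteq> 0" "c2 \<noteq> 0"
  shows "integrable lborel (\<lambda>x. \<phi> (c1 * x - t1) * cnj (\<phi> (c2 * x - t2)))"
proof (rule Bochner_Integration.integrable_bound)
  show "integrable lborel (\<lambda>x. (cmod (\<phi> (c1 * x - t1)))\<^sup>2 + (cmod (\<phi> (c2 * x - t2)))\<^sup>2)"
    using integrable_affine(2)[OF assms(1)] integrable_affine(2)[OF assms(2)] by auto
  have "u * v \<le> u\<^sup>2 + v\<^sup>2" if "u \<ge> 0" "v \<ge> 0" for u v :: real
    using sum_squares_bound[of u v] mult_nonneg_nonneg[OF that] by linarith
  then show "AE x in lborel. norm (\<phi> (c1 * x - t1) * cnj (\<phi> (c2 * x - t2)))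
      \<le> norm ((cmod (\<phi> (c1 * x - t1)))\<^sup>2 + (cmod (\<phi> (c2 * x - t2)))\<^sup>2)"
    by (simp add: norm_mult)
qed measurable

lemma orthonormal_dilated:
  fixes c :: real
  assumes c: "c > 0"
  shows "(\<integral>x. \<phi> (c * x - of_int j) * cnj (\<phi> (c * x - of_int k)) \<partial>lborel)
       = (if j = k then 1 / c else 0)"
proof -
  have "(if j = k then 1 else 0)
      = c *\<^sub>R (\<integral>x. \<phi> (c * x - of_int j) * cnj (\<phi> (c * x - of_int k)) \<partial>lborel)"
    using lborel_integral_real_affine[of c "\<lambda>y. \<phi> (y - of_int j) * cnj (\<phi> (y - of_int k))" 0]
      orthonormal c by simp
  then show ?thesis
    using c by (auto simp: scaleR_conv_of_real field_simps)
qed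

lemma cascade_coeff_eq_inner:
  assumes k: "k \<in> cascade_support a b L"
  shows "cascade_coeff h a b L k
       = of_real (sqrt 2) ^ L * (\<integral>x. \<phi> x * cnj (\<phi> (2 ^ L * x - of_int k)) \<partial>lborel)"
proof -
  define c :: real where "c = 2 ^ L"
  have c: "c > 0"
    by (simp add: c_def)
  have "(\<integral>x. \<phi> x * cnj (\<phi> (c * x - of_int k)) \<partial>lborel)
      = (\<integral>x. of_real (sqrt 2) ^ L * (\<Sum>j\<in>cascade_support a b L.
               cascade_coeff h a b L j * (\<phi> (c * x - of_int j) * cnj (\<phi> (c * x - of_int k)))) \<partial>lborel)"
    by (rule integral_cong_AE) (use cascade_refinement[of L] in
        \<open>measurable, eventually_elim, simp add: c_def sum_distrib_right mult.assoc\<close>)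
  also have "\<dots> = of_real (sqrt 2) ^ L * (\<Sum>j\<in>cascade_support a b L. cascade_coeff h a b L j *
                     (\<integral>x. \<phi> (c * x - of_int j) * cnj (\<phi> (c * x - of_int k)) \<partial>lborel))"
    using integrable_affine_product c by simp
  also have "\<dots> = of_real (sqrt 2) ^ L * (cascade_coeff h a b L k / c)"
    using k by (simp add: orthonormal_dilated[OF c] if_distrib sum.delta cong: if_cong)
  finally have "of_real (sqrt 2) ^ L * (\<integral>x. \<phi> x * cnj (\<phi> (c * x - of_int k)) \<partial>lborel)
      = (of_real (sqrt 2) ^ L * of_real (sqrt 2) ^ L) * cascade_coeff h a b L k / c"
    by simp
  also have "(of_real (sqrt 2) ^ L * of_real (sqrt 2) ^ L :: complex) = of_real c"
    by (simp add: c_def power_mult_distrib[symmetric] of_real_mult[symmetric] del: of_real_mult)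
  finally show ?thesis
    using c by (simp add: c_def)
qed

lemma integral_norm_dilated:
  fixes c :: real
  assumes "c > 0"
  shows "(\<integral>x. cmod (\<phi> (c * x - t)) \<partial>lborel) = (\<integral>y. cmod (\<phi> y) \<partial>lborel) / c"
  using lborel_integral_real_affine[of c "\<lambda>y. cmod (\<phi> y)" "- t"] assms
  by (simp add: algebra_simps)

lemma norm_cascade_coeff_le:
  assumes k: "k \<in> cascade_support a b L"
  shows "cmod (cascade_coeff h a b L k) \<le> B * (\<integral>y. cmod (\<phi> y) \<partial>lborel) / sqrt 2 ^ L"
proof -
  define c :: real where "c = 2 ^ L"
  have c: "c > 0" and c_sqrt: "c = sqrt 2 ^ L * sqrt 2 ^ L"
    by (simp_all add: c_def power_mult_distrib[symmetric])
  have "cmod (\<integral>x. \<phi> x * cnj (\<phi> (c * x - of_int k)) \<partial>lborel)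
      \<le> (\<integral>x. cmod (\<phi> x * cnj (\<phi> (c * x - of_int k))) \<partial>lborel)"
    by (rule integral_norm_bound)
  also have "\<dots> \<le> (\<integral>x. B * cmod (\<phi> (c * x - of_int k)) \<partial>lborel)"
  proof (rule integral_mono_AE)
    show "integrable lborel (\<lambda>x. cmod (\<phi> x * cnj (\<phi> (c * x - of_int k))))"
      using integrable_affine_product[of 1 c 0 "of_int k"] c by auto
    show "integrable lborel (\<lambda>x. B * cmod (\<phi> (c * x - of_int k)))"
      using integrable_affine(1)[of c "of_int k"] c by auto
    show "AE x in lborel. cmod (\<phi> x * cnj (\<phi> (c * x - of_int k))) \<le> B * cmod (\<phi> (c * x - of_int k))"
      using bounded by eventually_elim (simp add: norm_mult mult_right_mono)
  qed
  also have "\<dots> = B * (\<integral>y. cmod (\<phi> y) \<partial>lborel) / c"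
    using integral_norm_dilated[OF c] by simp
  finally have "sqrt 2 ^ L * cmod (\<integral>x. \<phi> x * cnj (\<phi> (c * x - of_int k)) \<partial>lborel)
      \<le> sqrt 2 ^ L * (B * (\<integral>y. cmod (\<phi> y) \<partial>lborel) / c)"
    by (rule mult_left_mono) simp
  then show ?thesis
    using cascade_coeff_eq_inner[OF k] by (simp add: norm_mult norm_power c_def[symmetric] c_sqrt)
qed

lemma integrable_indicator_norm: "integrable lborel (\<lambda>y. indicator S y * cmod (\<phi> y))"
  if "S \<in> sets borel"
proof (rule Bochner_Integration.integrable_bound[OF integrable_norm[OF integrable]])
  show "(\<lambda>y. indicator S y * cmod (\<phi> y)) \<in> borel_measurable lborel"
    using that by measurable
qed (auto simp: indicator_def)

lemma tendsto_exterior_integral: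
  "(\<lambda>L. \<integral>y. indicator (exterior a b (2 ^ L / 2)) y * cmod (\<phi> y) \<partial>lborel) \<longlonglongrightarrow> 0"
proof -
  have "(\<lambda>L. indicator (exterior a b (2 ^ L / 2)) y * cmod (\<phi> y)) \<longlonglongrightarrow> 0" for y
  proof -
    obtain N where "2 * (\<bar>y\<bar> + \<bar>of_int a\<bar> + \<bar>of_int b\<bar>) < (2::real) ^ N"
      using real_arch_pow[of 2] by auto
    then have N: "\<bar>y\<bar> + \<bar>of_int a\<bar> + \<bar>of_int b\<bar> \<le> (2::real) ^ N / 2"
      by simp
    have "y \<notin> exterior a b (2 ^ L / 2)" if "L \<ge> N" for L
      using that by (intro not_mem_exterior order_trans[OF N]) simp
    then have "\<forall>\<^sub>F L in sequentially. indicator (exterior a b (2 ^ L / 2)) y * cmod (\<phi> y) = 0"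
      unfolding eventually_sequentially by (intro exI[of _ N]) auto
    then show ?thesis
      by (rule tendsto_eventually)
  qed
  then show ?thesis
    using integrable_norm[OF integrable]
    by (intro Bochner_Integration.integral_dominated_convergence[where M = lborel and f = "\<lambda>y. 0"
          and s = "\<lambda>L y. indicator (exterior a b (2 ^ L / 2)) y * cmod (\<phi> y)"
          and w = "\<lambda>y. cmod (\<phi> y)", simplified]) (auto simp: indicator_def)
qed

lemma exterior_dilate:
  assumes x: "x \<in> exterior a b (1 / 2)" and j: "j \<in> cascade_support a b L"
  shows "2 ^ L * x - of_int j \<in> exterior a b (2 ^ L / 2)"
proof -
  define c :: real where "c = 2 ^ L"
  have c: "c \<ge> 1"
    by (simp add: c_def)
  have "real_of_int (a * (2 ^ L - 1)) \<le> of_int j" "of_int j \<le> real_of_int (b * (2 ^ L - 1))"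
    using j unfolding cascade_support_def of_int_le_iff by auto
  then have j': "of_int a * (c - 1) \<le> of_int j" "of_int j \<le> of_int b * (c - 1)"
    by (simp_all add: c_def)
  from x have "x < of_int a - 1/2 \<or> of_int b + 1/2 < x"
    by (auto simp: exterior_def)
  then have "c * x - of_int j < of_int a - c/2 \<or> of_int b + c/2 < c * x - of_int j"
  proof
    assume "x < of_int a - 1/2"
    then have "c * x < c * (of_int a - 1/2)"
      using c by (intro mult_strict_left_mono) auto
    then show ?thesis
      using j' by (simp add: algebra_simps)
  next
    assume "of_int b + 1/2 < x"
    then have "c * (of_int b + 1/2) < c * x"
      using c by (intro mult_strict_left_mono) auto
    then show ?thesis
      using j' by (simp add: algebra_simps)
  qed
  then show ?thesis
    by (auto simp: exterior_def c_def)
qed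

lemma norm_le_cascade:
  "AE x in lborel. indicator (exterior a b (1 / 2)) x * cmod (\<phi> x) \<le> sqrt 2 ^ L *
     (\<Sum>j\<in>cascade_support a b L. cmod (cascade_coeff h a b L j) *
        (indicator (exterior a b (2 ^ L / 2)) (2 ^ L * x - of_int j) * cmod (\<phi> (2 ^ L * x - of_int j))))"
  using cascade_refinement[of L]
proof eventually_elim
  case (elim x)
  show ?case
  proof (cases "x \<in> exterior a b (1 / 2)")
    case True
    have "cmod (\<phi> x) = sqrt 2 ^ L *
        cmod (\<Sum>j\<in>cascade_support a b L. cascade_coeff h a b L j * \<phi> (2 ^ L * x - of_int j))"
      using elim by (simp add: norm_mult norm_power)
    also have "\<dots> \<le> sqrt 2 ^ L * (\<Sum>j\<in>cascade_support a b L.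
                 cmod (cascade_coeff h a b L j) * cmod (\<phi> (2 ^ L * x - of_int j)))"
      by (intro mult_left_mono order_trans[OF norm_sum]) (simp_all add: norm_mult)
    finally show ?thesis
      using True exterior_dilate by simp
  qed (auto intro!: sum_nonneg mult_nonneg_nonneg simp: indicator_def)
qed

text \<open>
  Pushing the mass of \<open>|\<phi>|\<close> near infinity through the \<open>L\<close>-fold refinement equation moves it
  further out by a factor \<open>2\<^sup>L\<close>, while the coefficient bound compensates the \<open>\<approx> M 2\<^sup>L\<close> terms.
\<close>
lemma exterior_integral_le:
  "(\<integral>x. indicator (exterior a b (1 / 2)) x * cmod (\<phi> x) \<partial>lborel)
     \<le> real_of_int (b - a + 1) * B * (\<integral>y. cmod (\<phi> y) \<partial>lborel) *
        (\<integral>y. indicator (exterior a b (2 ^ L / 2)) y * cmod (\<phi> y) \<partial>lborel)"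
proof -
  define c :: real where "c = 2 ^ L"
  have c: "c > 0"
    by (simp add: c_def)
  define N1 where "N1 = (\<integral>y. cmod (\<phi> y) \<partial>lborel)"
  define t where "t = (\<integral>y. indicator (exterior a b (c / 2)) y * cmod (\<phi> y) \<partial>lborel)"
  have N1: "N1 \<ge> 0" and t: "t \<ge> 0"
    by (simp_all add: N1_def t_def)
  let ?G = "\<lambda>j x. indicator (exterior a b (c / 2)) (c * x - of_int j) * cmod (\<phi> (c * x - of_int j))"
  have G_integrable: "integrable lborel (?G j)" for j
    using lborel_integrable_real_affine[OF integrable_indicator_norm[OF exterior_in_borel[of a b "c / 2"]], of c "- of_int j"] c
    by (simp add: algebra_simps)
  have G_integral: "(\<integral>x. ?G j x \<partial>lborel) = t / c" for j
    using lborel_integral_real_affine[of c "\<lambda>y. indicator (exterior a b (c / 2)) y * cmod (\<phi> y)"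
        "- of_int j"] c
    by (simp add: t_def algebra_simps)
  have "(\<integral>x. indicator (exterior a b (1 / 2)) x * cmod (\<phi> x) \<partial>lborel)
      \<le> (\<integral>x. sqrt 2 ^ L * (\<Sum>j\<in>cascade_support a b L. cmod (cascade_coeff h a b L j) * ?G j x) \<partial>lborel)"
    using norm_le_cascade[of L] G_integrable
    by (intro integral_mono_AE integrable_indicator_norm) (auto simp: c_def)
  also have "\<dots> = sqrt 2 ^ L * (\<Sum>j\<in>cascade_support a b L. cmod (cascade_coeff h a b L j) * (t / c))"
    using G_integrable by (simp add: G_integral)
  also have "\<dots> \<le> sqrt 2 ^ L * (\<Sum>j\<in>cascade_support a b L. (B * N1 / sqrt 2 ^ L) * (t / c))"
    using norm_cascade_coeff_le t c unfolding N1_def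
    by (intro mult_left_mono sum_mono mult_right_mono) auto
  also have "\<dots> = real (card (cascade_support a b L)) / c * (B * N1 * t)"
    by (simp add: field_simps)
  also have "\<dots> \<le> real_of_int (b - a + 1) * (B * N1 * t)"
    using card_cascade_support_le[OF support_nonempty, of L] c bound_nonneg N1 t
    by (intro mult_right_mono) (auto simp: c_def field_simps)
  finally show ?thesis
    by (simp add: N1_def t_def c_def mult.assoc)
qed

lemma exterior_integral_eq_0:
  "(\<integral>x. indicator (exterior a b (1 / 2)) x * cmod (\<phi> x) \<partial>lborel) = 0"
proof -
  define K where "K = real_of_int (b - a + 1) * B * (\<integral>y. cmod (\<phi> y) \<partial>lborel)"
  have "(\<lambda>L. K * (\<integral>y. indicator (exterior a b (2 ^ L / 2)) y * cmod (\<phi> y) \<partial>lborel)) \<longlonglongrightarrow> K * 0"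
    by (intro tendsto_mult tendsto_const tendsto_exterior_integral)
  then have "(\<integral>x. indicator (exterior a b (1 / 2)) x * cmod (\<phi> x) \<partial>lborel) \<le> 0"
    using exterior_integral_le by (intro LIMSEQ_le_const) (auto simp: K_def)
  then show ?thesis
    by (simp add: order_antisym)
qed

lemma integral_norm_square: "(\<integral>x. (cmod (\<phi> x))\<^sup>2 \<partial>lborel) = 1"
proof -
  have "(\<integral>x. complex_of_real ((cmod (\<phi> x))\<^sup>2) \<partial>lborel) = (\<integral>x. \<phi> x * cnj (\<phi> x) \<partial>lborel)"
    by (simp only: complex_norm_square)
  also have "\<dots> = 1"
    using orthonormal[of 0 0] by simp
  finally show ?thesis
    by (simp only: integral_complex_of_real) simp
qed

text \<open>Off \<open>I = [a - 1/2, b + 1/2]\<close> the function \<open>\<phi>\<close> vanishes a.e.; on \<open>I\<close>, of length \<open>W = b - a + 1\<close>,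
  use \<open>|\<phi>| \<le> (\<surd>W/2) |\<phi>|\<^sup>2 + 1/(2\<surd>W)\<close> and \<open>\<parallel>\<phi>\<parallel>\<^sub>2 = 1\<close>.\<close>
lemma integral_norm_le: "(\<integral>x. cmod (\<phi> x) \<partial>lborel) \<le> sqrt (real_of_int (b - a + 1))"
proof -
  define W where "W = real_of_int (b - a + 1)"
  define s where "s = sqrt W"
  have W: "W \<ge> 1" and s: "s > 0" and s_sq: "s * s = W"
    using support_nonempty by (simp_all add: W_def s_def)
  define I where "I = {real_of_int a - 1/2 .. real_of_int b + 1/2}"
  have I: "integrable lborel (indicator I :: real \<Rightarrow> real)"
    by (simp add: I_def integrable_indicator_iff emeasure_lborel_Icc_eq)
  have split: "cmod (\<phi> x) = indicator I x * cmod (\<phi> x) + indicator (exterior a b (1/2)) x * cmod (\<phi> x)"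
    for x by (auto simp: I_def exterior_def indicator_def)
  have "(\<integral>x. cmod (\<phi> x) \<partial>lborel) = (\<integral>x. indicator I x * cmod (\<phi> x) \<partial>lborel)"
    using exterior_integral_eq_0
    by (subst split) (simp add: I_def Bochner_Integration.integral_add integrable_indicator_norm)
  also have "\<dots> \<le> (\<integral>x. (cmod (\<phi> x))\<^sup>2 * (s / 2) + indicator I x / (2 * s) \<partial>lborel)"
  proof (rule integral_mono)
    fix x
    have "2 * (cmod (\<phi> x) * s) \<le> (cmod (\<phi> x) * s)\<^sup>2 + 1"
      using sum_squares_bound[of "cmod (\<phi> x) * s" 1] by (simp add: power2_eq_square)
    then have "cmod (\<phi> x) \<le> (cmod (\<phi> x))\<^sup>2 * (s / 2) + 1 / (2 * s)"
      using s by (simp add: field_simps power2_eq_square)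
    then show "indicator I x * cmod (\<phi> x) \<le> (cmod (\<phi> x))\<^sup>2 * (s / 2) + indicator I x / (2 * s)"
      using s by (simp add: indicator_def)
  qed (use square_integrable I integrable_indicator_norm[of I] in \<open>auto simp: I_def\<close>)
  also have "\<dots> = s / 2 + W / (2 * s)"
    using square_integrable I integral_norm_square support_nonempty
    by (simp add: I_def W_def algebra_simps)
  also have "\<dots> = s"
    using s s_sq by (simp add: field_simps)
  finally show ?thesis
    by (simp add: s_def W_def)
qed

lemma scaling_output_l2norm_le:
  assumes f: "(\<lambda>n. cmod (f n)) summable_on UNIV"
  shows "l2norm (scaling_output h L f) \<le> real_of_int (b - a + 1) * B * l1norm f / sqrt 2 ^ L"
proof -
  define K where "K = nat (b - a + 1)"
  have K: "int K = b - a + 1"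
    using support_nonempty by (simp add: K_def)
  define A where "A = B * sqrt K / sqrt 2 ^ L"
  have A: "A \<ge> 0"
    using bound_nonneg by (simp add: A_def)
  have "B * (\<integral>y. cmod (\<phi> y) \<partial>lborel) / sqrt 2 ^ L \<le> A"
    using integral_norm_le bound_nonneg
    by (auto simp: A_def K[symmetric] intro!: divide_right_mono mult_left_mono)
  then have coeff_le: "cmod (cascade_coeff h a b L q) \<le> A" if "q \<in> cascade_support a b L" for q
    using norm_cascade_coeff_le[OF that] by linarith
  have "scaling_output h L f
      = (\<lambda>n. \<Sum>q\<in>cascade_support a b L. f (2 ^ L * n + q) * cnj (cascade_coeff h a b L q))"
    by (intro ext scaling_output_eq_cascade[OF filter_support])
  then have "l2norm (scaling_output h L f) \<le> A * sqrt K * l1norm f"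
    using cascade_support_subset_blocks[OF support_nonempty, of L] coeff_le
    by (simp only:) (rule l2norm_polyphase_le[OF f _ A], auto simp: K)
  also have "A * sqrt K * l1norm f = real_of_int (b - a + 1) * B * l1norm f / sqrt 2 ^ L"
    using K by (simp add: A_def)
  finally show ?thesis .
qed

end

lemma AE_norm_le_sup_norm_ess:
  assumes "sup_norm_ess \<phi> < \<infinity>"
  shows "AE x in lborel. cmod (\<phi> x) \<le> real_of_ereal (sup_norm_ess \<phi>)"
proof -
  have AE: "AE x in lborel. ereal (cmod (\<phi> x)) \<le> sup_norm_ess \<phi>"
    unfolding sup_norm_ess_def by (rule esssup_AE)
  have "sup_norm_ess \<phi> \<noteq> - \<infinity>"
  proof
    assume "sup_norm_ess \<phi> = - \<infinity>"
    with AE have "AE x in (lborel :: real measure). False"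
      by simp
    then show False
      by (simp add: AE_lborel_const)
  qed
  with assms AE show ?thesis
    by (cases "sup_norm_ess \<phi>") auto
qed

lemma scaling_filter_supportE:
  assumes "scaling_filter h M \<phi>"
  obtains a where "M \<ge> 1" and "\<And>n. h n \<noteq> 0 \<Longrightarrow> a \<le> n \<and> n \<le> a + int M - 1"
proof -
  obtain a where a: "\<And>n. h n \<noteq> 0 \<Longrightarrow> a \<le> n \<and> n < a + int M"
    using assms unfolding scaling_filter_def supported_len_def by blast
  have "M \<noteq> 0"
  proof
    assume "M = 0"
    with a have "h = (\<lambda>_. 0)"
      by force
    then show False
      using assms by (simp add: scaling_filter_def filter_ft_def)
  qed
  show ?thesis
  proof (rule that[of a])
    show "M \<ge> 1"
      using \<open>M \<noteq> 0\<close> by simp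
    show "a \<le> n \<and> n \<le> a + int M - 1" if "h n \<noteq> 0" for n
      using a[OF that] by simp
  qed
qed

lemma inverse_sqrt2_power_le: "1 / sqrt 2 ^ L \<le> 2 powr (- (real L - 1) / 2)"
proof -
  have "(2::real) powr (real L / 2) = (2 powr (1 / 2)) powr real L"
    by (simp only: powr_powr) simp
  also have "\<dots> = sqrt 2 ^ L"
    by (simp add: powr_realpow powr_half_sqrt)
  finally have "1 / sqrt 2 ^ L = inverse (2 powr (real L / 2))"
    by (simp only: divide_inverse mult_1)
  also have "\<dots> = 2 powr (- (real L / 2))"
    by (rule powr_minus[symmetric])
  also have "\<dots> \<le> 2 powr (- (real L - 1) / 2)"
    by (rule powr_mono) (auto simp: field_simps)
  finally show ?thesis .
qed

theorem lemma1:
  fixes h :: "int \<Rightarrow> complex" and M :: nat and \<phi> :: "real \<Rightarrow> complex"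
    and L :: nat and f :: "int \<Rightarrow> complex"
  assumes "scaling_filter h M \<phi>"
    and "sup_norm_ess \<phi> < \<infinity>"
    and "L \<ge> 1"
    and "(\<lambda>n. cmod (f n)) summable_on UNIV"
  shows "l2norm (scaling_output h L f)
           \<le> real M * 2 powr (- (real L - 1) / 2) * real_of_ereal (sup_norm_ess \<phi>) * l1norm f"
proof -
  obtain a where M: "M \<ge> 1" and support: "\<And>n. h n \<noteq> 0 \<Longrightarrow> a \<le> n \<and> n \<le> a + int M - 1"
    by (rule scaling_filter_supportE[OF assms(1)]) blast
  define B where "B = real_of_ereal (sup_norm_ess \<phi>)"
  interpret bounded_scaling_function h \<phi> a "a + int M - 1" B
    using assms(1) support M AE_norm_le_sup_norm_ess[OF assms(2)]
    by unfold_locales (auto simp: scaling_filter_def B_def)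
  have "l1norm f \<ge> 0"
    unfolding l1norm_def by (rule infsum_nonneg) auto
  then have "real M * B * l1norm f * (1 / sqrt 2 ^ L)
      \<le> real M * B * l1norm f * 2 powr (- (real L - 1) / 2)"
    using bound_nonneg by (intro mult_left_mono inverse_sqrt2_power_le) auto
  with scaling_output_l2norm_le[OF assms(4), of L] show ?thesis
    by (simp add: B_def mult_ac)
qed

end
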